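(* Let $g\in L^1(\Omega)$ and $k,l\in\mathbb Z$. Then $$\alpha(M_g)(k/a,l)=\begin{cases}e^{\pi ilk/a}\displaystyle\int_\Omega g(\theta,\sigma)e^{-2\pi i(l\sigma+k\theta/a)}\,d\theta\,d\sigma,& k\in a\mathbb Z,\\ 0,&\text{otherwise.}\end{cases}$$
   Context: $\mathcal H=L^2(\mathbb R)$, $\Omega=[0,1)\times[0,1)$, $(\rho(x,y,z)\varphi)(t)=z\,e^{\pi i(xy+2yt)}\varphi(t+x)$, $\rho(w,1)=\rho(x,y,1)$ for $w=(x,y)$. Fix a positive integer $a$, $N=\mathbb Z\times a\mathbb Z$, $N^\perp=\frac1a\mathbb Z\times\mathbb Z$. $\mathcal A_N$ is the von Neumann algebra of bounded $T$ on $\mathcal H$ with $\rho(n,1)T\rho(n,1)^{-1}=T$ for all $n\in N$, with faithful normal finite trace $\tau(T)=\sum_{h=0}^{a-1}\langle T\chi_h,\chi_h\rangle$, $\chi_h=\mathbf 1_{[h/a,(h+1)/a)}$, extended to the noncommutative space $L^1(\mathcal A_N,\tau)$. For $T\in L^1(\mathcal A_N,\tau)$ and $n'\in N^\perp$, $\alpha(T)(n')=\tau(T\rho(n',1)^* )$. Zak transform: $(Z\varphi)(\theta,\sigma)=\sum_{l\in\mathbb Z}\varphi(\sigma-l)e^{2\pi il\theta}$, extended to a unitary $\mathcal H\to L^2(\Omega)$. $M_g\varphi=Z^{-1}(g\cdot Z\varphi)$ on $\{\varphi:g\cdot Z\varphi\in L^2(\Omega)\}$; $M_g\in L^1(\mathcal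 A_N,\tau)$. *)

theory Defs
  imports "HOL-Analysis.Analysis"
begin

text \<open>Elements of H = L^2(R) are represented by functions real => complex.\<close>

definition Omega :: "(real \<times> real) set" where
  "Omega = {0..<1} \<times> {0..<1}"

definition rho :: "real \<Rightarrow> real \<Rightarrow> complex \<Rightarrow> (real \<Rightarrow> complex) \<Rightarrow> real \<Rightarrow> complex" where
  "rho x y z \<phi> t = z * exp (pi * \<i> * complex_of_real (x * y + 2 * y * t)) * \<phi> (t + x)"

text \<open>Adjoint (= inverse, rho(w,1) is unitary) of rho(x,y,1): it is rho(-x,-y,1).\<close>
definition rho_adj :: "real \<Rightarrow> real \<Rightarrow> (real \<Rightarrow> complex) \<Rightarrow> real \<Rightarrow> complex" where
  "rho_adj x y \<phi> = rho (- x) (- y) 1 \<phi>"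

definition chi :: "nat \<Rightarrow> nat \<Rightarrow> real \<Rightarrow> complex" where
  "chi a h t = indicator {real h / real a ..< (real h + 1) / real a} t"

definition zak :: "(real \<Rightarrow> complex) \<Rightarrow> real \<times> real \<Rightarrow> complex" where
  "zak \<phi> p = (case p of (\<theta>, \<sigma>) \<Rightarrow>
     (\<Sum>\<^sub>\<infinity> l::int. \<phi> (\<sigma> - of_int l) * exp (2 * pi * \<i> * of_int l * complex_of_real \<theta>)))"

text \<open>Inverse Zak transform (recovering phi(t) from the Fourier coefficients in theta
  at sigma = frac t).\<close>
definition zak_inv :: "(real \<times> real \<Rightarrow> complex) \<Rightarrow> real \<Rightarrow> complex" where
  "zak_inv F t = set_lebesgue_integral lborel {0..<1}
     (\<lambda>\<theta>. F (\<theta>, frac t) * exp (2 * pi * \<i> * of_int \<lfloor>t\<rfloor> * complex_of_real \<theta>))"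

definition M_op :: "(real \<times> real \<Rightarrow> complex) \<Rightarrow> (real \<Rightarrow> complex) \<Rightarrow> real \<Rightarrow> complex" where
  "M_op g \<phi> = zak_inv (\<lambda>p. g p * zak \<phi> p)"

definition inner_H :: "(real \<Rightarrow> complex) \<Rightarrow> (real \<Rightarrow> complex) \<Rightarrow> complex" where
  "inner_H f h = integral\<^sup>L lborel (\<lambda>t. f t * cnj (h t))"

text \<open>tau(M_G rho(k/a,l,1)^*) = sum_h < M_G rho(k/a,l,1)^* chi_h, chi_h >
  (the trace formula, meaningful for bounded G, where M_G is bounded).\<close>
definition tau_bdd :: "nat \<Rightarrow> (real \<times> real \<Rightarrow> complex) \<Rightarrow> int \<Rightarrow> int \<Rightarrow> complex" where
  "tau_bdd a G k l = (\<Sum>h<a. inner_H (M_op G (rho_adj (of_int k / real a) (of_int l) (chi a h))) (chi a h))"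

text \<open>alpha(M_g)(k/a,l) = tau(M_g rho(k/a,l,1)^*) for g in L^1(Omega), where tau is
  extended to L^1(A_N,tau) by continuity: value obtained as the limit along any
  sequence of bounded G_n converging to g in L^1(Omega).\<close>
definition alpha_M :: "nat \<Rightarrow> (real \<times> real \<Rightarrow> complex) \<Rightarrow> int \<Rightarrow> int \<Rightarrow> complex" where
  "alpha_M a g k l = (THE c. \<forall>G :: nat \<Rightarrow> real \<times> real \<Rightarrow> complex.
      ((\<forall>n. set_integrable lborel Omega (G n) \<and> (\<exists>B. \<forall>p\<in>Omega. norm (G n p) \<le> B)) \<and>
       (\<lambda>n. set_lebesgue_integral lborel Omega (\<lambda>p. norm (G n p - g p))) \<longlonglongrightarrow> 0)
      \<longrightarrow> (\<lambda>n. tau_bdd a (G n) k l) \<longlonglongrightarrow> c)"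

end

theory Submission
  imports Defs
begin

text \<open>On the cell [h/a, (h+1)/a) the Zak transform of rho(k/a, l, 1)^* chi_h reduces to the single
  term of its defining series with a l' + k = 0: it vanishes unless a divides k, and is then
  e^(pi i l k/a) times the character e^(-2 pi i (l sigma + k theta/a)). Hence for every integrable G
  the trace sum over h of <M_G rho(k/a, l, 1)^* chi_h, chi_h> is a sum of integrals over the cells,
  which together fill [0, 1), and Fubini turns it into the integral over Omega in the claim. That
  expression is L^1-continuous in G, and the truncations of g are bounded L^1-approximations of g,
  so it is the value of the continuous extension alpha(M_g).\<close>

lemma (in pair_sigma_finite) set_integral_Times_snd:
  fixes f :: "_ \<times> _ \<Rightarrow> _::{banach, second_countable_topology}"
  assumes f: "set_integrable (M1 \<Otimes>\<^sub>M M2) (A \<times> B) f"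
  shows "set_integrable M2 B (\<lambda>y. LINT x:A|M1. f (x, y))"
    and "(LINT y:B|M2. LINT x:A|M1. f (x, y)) = (LINT z:A \<times> B|M1 \<Otimes>\<^sub>M M2. f z)"
proof -
  define F where "F x y = indicator B y *\<^sub>R (indicator A x *\<^sub>R f (x, y))" for x y
  have F_eq: "case_prod F = (\<lambda>z. indicator (A \<times> B) z *\<^sub>R f z)"
    by (auto simp: F_def fun_eq_iff indicator_times)
  have F: "integrable (M1 \<Otimes>\<^sub>M M2) (case_prod F)"
    using f by (simp add: set_integrable_def F_eq)
  have inner: "(\<integral>x. F x y \<partial>M1) = indicator B y *\<^sub>R (LINT x:A|M1. f (x, y))" for y
    unfolding F_def set_lebesgue_integral_def by (rule integral_scaleR_right)
  show "set_integrable M2 B (\<lambda>y. LINT x:A|M1. f (x, y))"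
    using integrable_snd[OF F] by (simp add: set_integrable_def inner)
  show "(LINT y:B|M2. LINT x:A|M1. f (x, y)) = (LINT z:A \<times> B|M1 \<Otimes>\<^sub>M M2. f z)"
    using integral_snd[OF F] by (simp add: set_lebesgue_integral_def inner F_eq)
qed

lemma set_integrable_mult_norm_le_one:
  fixes f E :: "'a \<Rightarrow> complex"
  assumes f: "set_integrable M A f" and E: "E \<in> borel_measurable M" and "\<And>x. norm (E x) \<le> 1"
  shows "set_integrable M A (\<lambda>x. f x * E x)"
proof (rule set_integrable_bound[OF f])
  have "(\<lambda>x. indicator A x *\<^sub>R f x) \<in> borel_measurable M"
    using f unfolding set_integrable_def by (rule borel_measurable_integrable)
  then have "(\<lambda>x. (indicator A x *\<^sub>R f x) * E x) \<in> borel_measurable M"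
    using E by measurable
  then show "set_borel_measurable M A (\<lambda>x. f x * E x)"
    by (simp add: set_borel_measurable_def)
  show "AE x in M. x \<in> A \<longrightarrow> norm (f x * E x) \<le> norm (f x)"
    using assms(3) by (simp add: norm_mult mult_left_le)
qed

lemma tendsto_set_integral_mult_L1:
  fixes f E :: "'a \<Rightarrow> complex" and F :: "nat \<Rightarrow> 'a \<Rightarrow> complex"
  assumes f: "set_integrable M A f" and F: "\<And>n. set_integrable M A (F n)"
    and E: "E \<in> borel_measurable M" and E_le: "\<And>x. norm (E x) \<le> 1"
    and L1: "(\<lambda>n. LINT x:A|M. norm (F n x - f x)) \<longlonglongrightarrow> 0"
  shows "(\<lambda>n. LINT x:A|M. F n x * E x) \<longlonglongrightarrow> (LINT x:A|M. f x * E x)"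
proof (rule LIM_zero_cancel, rule Lim_null_comparison[OF _ L1], intro always_eventually allI)
  fix n
  have diff: "set_integrable M A (\<lambda>x. (F n x - f x) * E x)"
    using f F by (intro set_integrable_mult_norm_le_one E E_le set_integral_diff)
  have "(LINT x:A|M. F n x * E x) - (LINT x:A|M. f x * E x) = (LINT x:A|M. (F n x - f x) * E x)"
    using f F by (simp add: set_integrable_mult_norm_le_one[OF _ E E_le] left_diff_distrib)
  also have "norm \<dots> \<le> (LINT x:A|M. norm ((F n x - f x) * E x))"
    using diff by (rule set_integral_norm_bound)
  also have "\<dots> \<le> (LINT x:A|M. norm (F n x - f x))"
    using diff f F E_le
    by (intro set_integral_mono set_integrable_norm set_integral_diff)
       (auto simp: norm_mult mult_left_le)
  finally show "norm ((LINT x:A|M. F n x * E x) - (LINT x:A|M. f x * E x))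
      \<le> (LINT x:A|M. norm (F n x - f x))" .
qed

lemma set_integrable_bounded_approximation:
  fixes f :: "'a \<Rightarrow> 'b::{banach, second_countable_topology}"
  assumes f: "set_integrable M A f"
  obtains F where "\<And>n. set_integrable M A (F n)" and "\<And>n x. norm (F n x) \<le> real n"
    and "(\<lambda>n. LINT x:A|M. norm (F n x - f x)) \<longlonglongrightarrow> 0"
proof
  define F where "F n x = (if norm (f x) \<le> real n then f x else 0)" for n x
  have f_meas: "(\<lambda>x. indicator A x *\<^sub>R f x) \<in> borel_measurable M"
    using f unfolding set_integrable_def by (rule borel_measurable_integrable)
  show F_int: "set_integrable M A (F n)" for n
  proof (rule set_integrable_bound[OF f])
    have "(\<lambda>x. indicator A x *\<^sub>R F n x) =
        (\<lambda>x. if norm (indicator A x *\<^sub>R f x) \<le> real n then indicator A x *\<^sub>R f x else 0)"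
      by (auto simp: F_def indicator_def)
    also have "\<dots> \<in> borel_measurable M"
      using f_meas by measurable
    finally show "set_borel_measurable M A (F n)"
      unfolding set_borel_measurable_def .
  qed (simp add: F_def)
  show "norm (F n x) \<le> real n" for n x
    by (simp add: F_def)
  have "(\<lambda>n. \<integral>x. indicator A x *\<^sub>R norm (F n x - f x) \<partial>M) \<longlonglongrightarrow> (\<integral>x. 0 \<partial>M)"
  proof (rule integral_dominated_convergence[where w = "\<lambda>x. indicator A x *\<^sub>R norm (f x)"])
    show "(\<lambda>x. indicator A x *\<^sub>R norm (F n x - f x)) \<in> borel_measurable M" for n
      using set_integrable_norm[OF set_integral_diff(1)[OF F_int f]]
      unfolding set_integrable_def by (rule borel_measurable_integrable)
    show "integrable M (\<lambda>x. indicator A x *\<^sub>R norm (f x))"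
      using set_integrable_norm[OF f] unfolding set_integrable_def .
    show "AE x in M. (\<lambda>n. indicator A x *\<^sub>R norm (F n x - f x)) \<longlonglongrightarrow> 0"
    proof (intro AE_I2 tendsto_eventually)
      fix x
      obtain N :: nat where "norm (f x) \<le> real N"
        using real_arch_simple by blast
      then show "\<forall>\<^sub>F n in sequentially. indicator A x *\<^sub>R norm (F n x - f x) = 0"
        unfolding eventually_sequentially F_def
        by (metis (mono_tags) diff_self norm_zero order_trans of_nat_mono scaleR_zero_right)
    qed
    show "AE x in M. norm (indicator A x *\<^sub>R norm (F n x - f x)) \<le> indicator A x *\<^sub>R norm (f x)" for n
      by (intro AE_I2) (auto simp: F_def indicator_def)
  qed simp
  then show "(\<lambda>n. LINT x:A|M. norm (F n x - f x)) \<longlonglongrightarrow> 0"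
    by (simp add: set_lebesgue_integral_def)
qed

definition cell :: "nat \<Rightarrow> nat \<Rightarrow> real set" where
  "cell a h = {real h / real a ..< (real h + 1) / real a}"

lemma chi_eq_indicator_cell: "chi a h = indicator (cell a h)"
  by (simp add: fun_eq_iff chi_def cell_def)

lemma sets_cell [measurable]: "cell a h \<in> sets borel"
  by (simp add: cell_def)

lemma mem_cell_iff:
  assumes "a > 0"
  shows "t \<in> cell a h \<longleftrightarrow> \<lfloor>real a * t\<rfloor> = int h"
  using assms by (simp add: cell_def floor_eq_iff field_simps)

lemma diff_mem_cell_iff:
  assumes a: "a > 0" and t: "t \<in> cell a h"
  shows "t - of_int m / real a \<in> cell a h \<longleftrightarrow> m = 0"
proof -
  have "real a * (t - of_int m / real a) = real a * t - of_int m"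
    using a by (simp add: field_simps)
  then show ?thesis
    using t by (simp add: mem_cell_iff[OF a])
qed

lemma UN_cell:
  assumes a: "a > 0"
  shows "(\<Union>h<a. cell a h) = {0..<1}"
proof (intro set_eqI iffI)
  fix t assume "t \<in> (\<Union>h<a. cell a h)"
  then obtain h where "h < a" "real h \<le> real a * t" "real a * t < real h + 1"
    using a by (auto simp: cell_def field_simps)
  then have "0 \<le> real a * t" "real a * t < real a * 1"
    by linarith+
  then show "t \<in> {0..<1}"
    using a by (simp add: zero_le_mult_iff)
next
  fix t :: real assume t: "t \<in> {0..<1}"
  then have "0 \<le> \<lfloor>real a * t\<rfloor>" "\<lfloor>real a * t\<rfloor> < int a"
    using a by (simp_all add: floor_less_iff)
  then show "t \<in> (\<Union>h<a. cell a h)"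
    by (intro UN_I[of "nat \<lfloor>real a * t\<rfloor>"]) (simp_all add: mem_cell_iff[OF a] nat_less_iff)
qed

lemma sum_set_integral_cell:
  fixes f :: "real \<Rightarrow> 'b::{banach, second_countable_topology}"
  assumes a: "a > 0" and f: "set_integrable lborel {0..<1} f"
  shows "(\<Sum>h<a. LINT t:cell a h|lborel. f t) = (LINT t:{0..<1}|lborel. f t)"
proof -
  have "(LINT t:(\<Union>h<a. cell a h)|lborel. f t) = (\<Sum>h<a. LINT t:cell a h|lborel. f t)"
  proof (rule set_integral_finite_UN_AE)
    show "AE t in lborel. t \<in> cell a i \<and> t \<in> cell a j \<longrightarrow> i = j" for i j
      by (simp add: mem_cell_iff[OF a])
    show "set_integrable lborel (cell a h) f" if "h \<in> {..<a}" for h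
      using that by (intro set_integrable_subset[OF f]) (auto simp: cell_def simp flip: UN_cell[OF a])
  qed (auto simp: cell_def)
  then show ?thesis
    by (simp add: UN_cell[OF a])
qed

definition fourier_char :: "nat \<Rightarrow> int \<Rightarrow> int \<Rightarrow> real \<times> real \<Rightarrow> complex" where
  "fourier_char a k l = (\<lambda>(\<theta>, \<sigma>).
     exp (- 2 * pi * \<i> * complex_of_real (of_int l * \<sigma> + of_int k * \<theta> / real a)))"

lemma norm_fourier_char [simp]: "norm (fourier_char a k l p) = 1"
  by (simp add: fourier_char_def case_prod_beta norm_exp_eq_Re)

lemma borel_measurable_fourier_char [measurable]: "fourier_char a k l \<in> borel_measurable lborel"
proof -
  have "continuous_on UNIV (fourier_char a k l)"
    unfolding fourier_char_def case_prod_beta times_divide_eq_left[symmetric]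
    by (intro continuous_intros)
  then show ?thesis
    by (simp add: borel_measurable_continuous_onI)
qed

lemma rho_adj_apply:
  "rho_adj x y \<phi> t = exp (pi * \<i> * complex_of_real (x * y - 2 * y * t)) * \<phi> (t - x)"
  by (simp add: rho_adj_def rho_def)

lemma zak_rho_adj_chi:
  assumes a: "a > 0" and t: "t \<in> cell a h"
  shows "zak (rho_adj (of_int k / real a) (of_int l) (chi a h)) (\<theta>, t) =
    (if int a dvd k then exp (pi * \<i> * of_int l * of_int k / of_nat a) * fourier_char a k l (\<theta>, t)
     else 0)"
proof -
  define S where "S m = rho_adj (of_int k / real a) (of_int l) (chi a h) (t - of_int m) *
      exp (2 * pi * \<i> * of_int m * complex_of_real \<theta>)" for m :: int
  have zak_eq: "zak (rho_adj (of_int k / real a) (of_int l) (chi a h)) (\<theta>, t) = infsum S UNIV"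
    unfolding zak_def S_def by simp
  have shift: "t - of_int m - of_int k / real a = t - of_int (int a * m + k) / real a" for m
    using a by (simp add: field_simps)
  have S_zero: "S m = 0" if "int a * m + k \<noteq> 0" for m
  proof -
    have "t - of_int m - of_int k / real a \<notin> cell a h"
      unfolding shift using that diff_mem_cell_iff[OF a t] by blast
    then show ?thesis
      by (simp add: S_def rho_adj_apply chi_eq_indicator_cell)
  qed
  show ?thesis
  proof (cases "int a dvd k")
    case False
    then have "S m = 0" for m
      by (metis S_zero add.commute add_eq_0_iff dvd_minus_iff dvd_triv_left)
    then show ?thesis
      using False zak_eq by (simp add: infsum_0)
  next
    case True
    then obtain j where k: "k = int a * j"
      by (auto simp: dvd_def)
    have "infsum S UNIV = infsum S {-j}"
      using a by (intro infsum_cong_neutral S_zero) (auto simp: k simp flip: distrib_left)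
    also have "\<dots> = exp (pi * \<i> * complex_of_real (of_int j * of_int l - 2 * of_int l * (t + of_int j))) *
        exp (2 * pi * \<i> * of_int (- j) * complex_of_real \<theta>)"
      using a diff_mem_cell_iff[OF a t, of 0]
      by (simp add: S_def rho_adj_apply chi_eq_indicator_cell k t)
    also have "\<dots> = exp (pi * \<i> * of_int l * of_int j) *
        exp (- 2 * pi * \<i> * complex_of_real (of_int l * t + of_int j * \<theta>)) *
        exp (2 * of_int (- (l * j)) * pi * \<i>)"
      by (simp add: mult_exp_exp algebra_simps)
    also have "\<dots> = exp (pi * \<i> * of_int l * of_int j) *
        exp (- 2 * pi * \<i> * complex_of_real (of_int l * t + of_int j * \<theta>))"
      using exp_integer_2pi[of "of_int (- (l * j))"] by simp
    also have "\<dots> = exp (pi * \<i> * of_int l * of_int k / of_nat a) * fourier_char a k l (\<theta>, t)"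
      using a by (simp add: k fourier_char_def mult.assoc)
    finally show ?thesis
      using True zak_eq by simp
  qed
qed

lemma M_op_apply:
  assumes "t \<in> {0..<1}"
  shows "M_op G \<phi> t = (LINT \<theta>:{0..<1}|lborel. G (\<theta>, t) * zak \<phi> (\<theta>, t))"
proof -
  have "frac t = t" "\<lfloor>t\<rfloor> = 0"
    using assms by (simp_all add: frac_eq floor_eq_iff)
  then show ?thesis
    by (simp add: M_op_def zak_inv_def)
qed

lemma inner_H_indicator: "inner_H f (indicator S) = (LINT t:S|lborel. f t)"
proof -
  have "f t * cnj (indicator S t) = indicator S t *\<^sub>R f t" for t
    by (simp add: indicator_def)
  then show ?thesis
    by (simp add: inner_H_def set_lebesgue_integral_def)
qed

lemma M_op_rho_adj_chi:
  assumes a: "a > 0" and h: "h < a" and t: "t \<in> cell a h"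
  shows "M_op G (rho_adj (of_int k / real a) (of_int l) (chi a h)) t =
    (if int a dvd k then exp (pi * \<i> * of_int l * of_int k / of_nat a) *
       (LINT \<theta>:{0..<1}|lborel. G (\<theta>, t) * fourier_char a k l (\<theta>, t))
     else 0)"
proof -
  have "t \<in> {0..<1}"
    using h t by (auto simp flip: UN_cell[OF a])
  then show ?thesis
    by (simp add: M_op_apply zak_rho_adj_chi[OF a t] mult.left_commute flip: set_integral_mult_right)
qed

definition alpha_formula :: "nat \<Rightarrow> (real \<times> real \<Rightarrow> complex) \<Rightarrow> int \<Rightarrow> int \<Rightarrow> complex" where
  "alpha_formula a g k l = (if int a dvd k
     then exp (pi * \<i> * of_int l * of_int k / of_nat a) *
       (LINT p:Omega|lborel. g p * fourier_char a k l p)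
     else 0)"

lemma tau_bdd_eq_alpha_formula:
  assumes a: "a > 0" and G: "set_integrable lborel Omega G"
  shows "tau_bdd a G k l = alpha_formula a G k l"
proof -
  define c where "c = exp (pi * \<i> * of_int l * of_int k / of_nat a)"
  define \<Psi> where "\<Psi> \<sigma> = (LINT \<theta>:{0..<1}|lborel. G (\<theta>, \<sigma>) * fourier_char a k l (\<theta>, \<sigma>))" for \<sigma>
  have inner: "inner_H (M_op G (rho_adj (of_int k / real a) (of_int l) (chi a h))) (chi a h) =
      (LINT t:cell a h|lborel. if int a dvd k then c * \<Psi> t else 0)" if "h < a" for h
    unfolding chi_eq_indicator_cell[of a h] inner_H_indicator
    by (intro set_lebesgue_integral_cong)
       (simp_all add: M_op_rho_adj_chi[OF a that, unfolded chi_eq_indicator_cell] c_def \<Psi>_def)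
  have tau: "tau_bdd a G k l = (\<Sum>h<a. LINT t:cell a h|lborel. if int a dvd k then c * \<Psi> t else 0)"
    by (simp add: tau_bdd_def inner)
  show ?thesis
  proof (cases "int a dvd k")
    case True
    have GE: "set_integrable (lborel \<Otimes>\<^sub>M lborel) ({0..<1} \<times> {0..<1}) (\<lambda>p. G p * fourier_char a k l p)"
      using set_integrable_mult_norm_le_one[OF G] by (simp add: Omega_def lborel_prod)
    have "tau_bdd a G k l = c * (\<Sum>h<a. LINT t:cell a h|lborel. \<Psi> t)"
      using True by (simp add: tau sum_distrib_left)
    also have "\<dots> = c * (LINT t:{0..<1}|lborel. \<Psi> t)"
      using lborel_pair.set_integral_Times_snd(1)[OF GE]
      by (simp add: sum_set_integral_cell[OF a] \<Psi>_def)
    also have "\<dots> = alpha_formula a G k l"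
      using lborel_pair.set_integral_Times_snd(2)[OF GE] True
      by (simp add: alpha_formula_def c_def \<Psi>_def Omega_def lborel_prod)
    finally show ?thesis .
  qed (simp add: tau alpha_formula_def)
qed

lemma tendsto_alpha_formula:
  assumes g: "set_integrable lborel Omega g" and G: "\<And>n. set_integrable lborel Omega (G n)"
    and L1: "(\<lambda>n. LINT p:Omega|lborel. norm (G n p - g p)) \<longlonglongrightarrow> 0"
  shows "(\<lambda>n. alpha_formula a (G n) k l) \<longlonglongrightarrow> alpha_formula a g k l"
  unfolding alpha_formula_def
  using tendsto_set_integral_mult_L1[OF g G borel_measurable_fourier_char _ L1]
  by (auto intro: tendsto_mult_left)

lemma alpha_M_eqI:
  fixes F :: "(real \<times> real \<Rightarrow> complex) \<Rightarrow> complex"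
  assumes g: "set_integrable lborel Omega g"
    and tau: "\<And>G. set_integrable lborel Omega G \<Longrightarrow> \<exists>B. \<forall>p\<in>Omega. norm (G p) \<le> B \<Longrightarrow>
      tau_bdd a G k l = F G"
    and cont: "\<And>G. (\<And>n. set_integrable lborel Omega (G n)) \<Longrightarrow>
      (\<lambda>n. LINT p:Omega|lborel. norm (G n p - g p)) \<longlonglongrightarrow> 0 \<Longrightarrow> (\<lambda>n. F (G n)) \<longlonglongrightarrow> F g"
  shows "alpha_M a g k l = F g"
proof -
  let ?approx = "\<lambda>G :: nat \<Rightarrow> real \<times> real \<Rightarrow> complex.
    (\<forall>n. set_integrable lborel Omega (G n) \<and> (\<exists>B. \<forall>p\<in>Omega. norm (G n p) \<le> B)) \<and>
    (\<lambda>n. LINT p:Omega|lborel. norm (G n p - g p)) \<longlonglongrightarrow> 0"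
  have lim: "(\<lambda>n. tau_bdd a (G n) k l) \<longlonglongrightarrow> F g" if "?approx G" for G
    using that tau cont[of G] by simp
  \<comment> \<open>Without an approximating sequence every c would satisfy the defining property of alpha_M.\<close>
  obtain G0 where G0_int: "\<And>n. set_integrable lborel Omega (G0 n)"
    and G0_bdd: "\<And>n p. norm (G0 n p) \<le> real n"
    and G0_L1: "(\<lambda>n. LINT p:Omega|lborel. norm (G0 n p - g p)) \<longlonglongrightarrow> 0"
    using set_integrable_bounded_approximation[OF g] by blast
  have G0: "?approx G0"
    using G0_int G0_bdd G0_L1 by blast
  show ?thesis
    unfolding alpha_M_def
    by (rule the_equality) (use lim G0 LIMSEQ_unique in blast)+
qed

theorem lemma4p5:
  fixes a :: nat and g :: "real \<times> real \<Rightarrow> complex" and k l :: int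
  assumes "a > 0"
    and "set_integrable lborel Omega g"
  shows "alpha_M a g k l =
    (if int a dvd k
     then exp (pi * \<i> * of_int l * of_int k / of_nat a) *
          set_lebesgue_integral lborel Omega
            (\<lambda>(\<theta>, \<sigma>). g (\<theta>, \<sigma>) *
               exp (- 2 * pi * \<i> * complex_of_real (of_int l * \<sigma> + of_int k * \<theta> / real a)))
     else 0)"
proof -
  have "alpha_M a g k l = alpha_formula a g k l"
    using assms by (intro alpha_M_eqI) (simp_all add: tau_bdd_eq_alpha_formula tendsto_alpha_formula)
  then show ?thesis
    by (simp add: alpha_formula_def fourier_char_def case_prod_beta')
qed

end
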